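(* In the setting below, the assignment $\square$ on corelations preserves composition: for corelations $f\colon X\to Y$ and $g\colon Y\to Z$ in $\mathrm{Corel}_{(\mathcal E,\mathcal M)}(\mathcal C)$, $\square(g\circ f)=\square(g)\circ\square(f)$ as morphisms of $\mathrm{Corel}_{(\mathcal E',\mathcal M')}(\mathcal C')$ (i.e. up to isomorphism of cospans).
   Context: $\mathcal C,\mathcal C'$ are categories with finite colimits with costable factorisation systems $(\mathcal E,\mathcal M)$, $(\mathcal E',\mathcal M')$ (factorisation systems whose right class is stable under pushout). $A\colon\mathcal C\to\mathcal C'$ preserves finite colimits and $A(\mathcal M)\subseteq\mathcal M'$. An $(\mathcal E,\mathcal M)$-corelation is a cospan $X\xrightarrow{i}N\xleftarrow{o}Y$ with $[i,o]\in\mathcal E$, up to isomorphism; the $\mathcal E$-part of an arbitrary cospan is obtained by factoring $[i,o]=m\circ e$ ($e\colon X+Y\to\overline N\in\mathcal E$, $m\in\mathcal M$) and taking $X\xrightarrow{e\iota_X}\overline N\xleftarrow{e\iota_Y}Y$; corelations compose by taking the $\mathcal E$-part of the pushout composite cospan. The map $\square$ sends an $(\mathcal E,\mathcal M)$-corelation $X\xrightarrow{i}N\xleftarrow{o}Y$ to the $\mathcal E'$-part of the cospan $AX\xrightarrow{Ai}AN\xleftarrow{Ao}AY$. *)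

theory Defs
  imports Main
begin

record ('o, 'a) cat =
  cobj  :: "'o set"
  carr  :: "'a set"
  cdom  :: "'a \<Rightarrow> 'o"
  ccod  :: "'a \<Rightarrow> 'o"
  ccomp :: "'a \<Rightarrow> 'a \<Rightarrow> 'a"   (* ccomp C g f = g o f *)
  cid   :: "'o \<Rightarrow> 'a"

definition hom :: "('o, 'a) cat \<Rightarrow> 'o \<Rightarrow> 'o \<Rightarrow> 'a set" where
  "hom C x y = {f \<in> carr C. cdom C f = x \<and> ccod C f = y}"

definition category :: "('o, 'a) cat \<Rightarrow> bool" where
  "category C \<longleftrightarrow>
     (\<forall>f \<in> carr C. cdom C f \<in> cobj C \<and> ccod C f \<in> cobj C) \<and>
     (\<forall>x \<in> cobj C. cid C x \<in> hom C x x) \<and>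
     (\<forall>f \<in> carr C. \<forall>g \<in> carr C. ccod C f = cdom C g \<longrightarrow>
        ccomp C g f \<in> hom C (cdom C f) (ccod C g)) \<and>
     (\<forall>f \<in> carr C. ccomp C (cid C (ccod C f)) f = f \<and> ccomp C f (cid C (cdom C f)) = f) \<and>
     (\<forall>f \<in> carr C. \<forall>g \<in> carr C. \<forall>h \<in> carr C.
        ccod C f = cdom C g \<longrightarrow> ccod C g = cdom C h \<longrightarrow>
        ccomp C h (ccomp C g f) = ccomp C (ccomp C h g) f)"

definition iso :: "('o, 'a) cat \<Rightarrow> 'a \<Rightarrow> bool" where
  "iso C f \<longleftrightarrow> f \<in> carr C \<and>
     (\<exists>g \<in> hom C (ccod C f) (cdom C f).
        ccomp C g f = cid C (cdom C f) \<and> ccomp C f g = cid C (ccod C f))"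

definition is_initial :: "('o, 'a) cat \<Rightarrow> 'o \<Rightarrow> bool" where
  "is_initial C I \<longleftrightarrow> I \<in> cobj C \<and>
     (\<forall>T \<in> cobj C. \<exists>h \<in> hom C I T. \<forall>h' \<in> hom C I T. h' = h)"

definition is_coproduct :: "('o, 'a) cat \<Rightarrow> 'o \<Rightarrow> 'o \<Rightarrow> 'o \<Rightarrow> 'a \<Rightarrow> 'a \<Rightarrow> bool" where
  "is_coproduct C X Y S i1 i2 \<longleftrightarrow> i1 \<in> hom C X S \<and> i2 \<in> hom C Y S \<and>
     (\<forall>T f g. f \<in> hom C X T \<longrightarrow> g \<in> hom C Y T \<longrightarrow>
        (\<exists>h \<in> hom C S T. ccomp C h i1 = f \<and> ccomp C h i2 = g \<and>
           (\<forall>h' \<in> hom C S T. ccomp C h' i1 = f \<and> ccomp C h' i2 = g \<longrightarrow> h' = h)))"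

definition is_pushout :: "('o, 'a) cat \<Rightarrow> 'a \<Rightarrow> 'a \<Rightarrow> 'a \<Rightarrow> 'a \<Rightarrow> bool" where
  "is_pushout C f g p q \<longleftrightarrow> f \<in> carr C \<and> g \<in> carr C \<and> cdom C f = cdom C g \<and>
     p \<in> hom C (ccod C f) (ccod C p) \<and> q \<in> hom C (ccod C g) (ccod C p) \<and>
     ccod C q = ccod C p \<and> ccomp C p f = ccomp C q g \<and>
     (\<forall>T u v. u \<in> hom C (ccod C f) T \<longrightarrow> v \<in> hom C (ccod C g) T \<longrightarrow>
        ccomp C u f = ccomp C v g \<longrightarrow>
        (\<exists>h \<in> hom C (ccod C p) T. ccomp C h p = u \<and> ccomp C h q = v \<and>
           (\<forall>h' \<in> hom C (ccod C p) T. ccomp C h' p = u \<and> ccomp C h' q = v \<longrightarrow> h' = h)))"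

text \<open>Finite colimits: generated by an initial object, binary coproducts and pushouts.\<close>
definition has_finite_colimits :: "('o, 'a) cat \<Rightarrow> bool" where
  "has_finite_colimits C \<longleftrightarrow>
     (\<exists>I. is_initial C I) \<and>
     (\<forall>X \<in> cobj C. \<forall>Y \<in> cobj C. \<exists>S i1 i2. is_coproduct C X Y S i1 i2) \<and>
     (\<forall>f \<in> carr C. \<forall>g \<in> carr C. cdom C f = cdom C g \<longrightarrow> (\<exists>p q. is_pushout C f g p q))"

definition factorisation_system :: "('o, 'a) cat \<Rightarrow> 'a set \<Rightarrow> 'a set \<Rightarrow> bool" where
  "factorisation_system C E M \<longleftrightarrow>
     E \<subseteq> carr C \<and> M \<subseteq> carr C \<and>
     {f. iso C f} \<subseteq> E \<and> {f. iso C f} \<subseteq> M \<and>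
     (\<forall>e1 \<in> E. \<forall>e2 \<in> E. ccod C e1 = cdom C e2 \<longrightarrow> ccomp C e2 e1 \<in> E) \<and>
     (\<forall>m1 \<in> M. \<forall>m2 \<in> M. ccod C m1 = cdom C m2 \<longrightarrow> ccomp C m2 m1 \<in> M) \<and>
     (\<forall>f \<in> carr C. \<exists>e \<in> E. \<exists>m \<in> M. cdom C e = cdom C f \<and> ccod C e = cdom C m \<and>
        ccod C m = ccod C f \<and> ccomp C m e = f) \<and>
     (\<forall>e \<in> E. \<forall>m \<in> M. \<forall>u v. u \<in> hom C (cdom C e) (cdom C m) \<longrightarrow>
        v \<in> hom C (ccod C e) (ccod C m) \<longrightarrow> ccomp C m u = ccomp C v e \<longrightarrow>
        (\<exists>d \<in> hom C (ccod C e) (cdom C m). ccomp C d e = u \<and> ccomp C m d = v \<and>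
           (\<forall>d' \<in> hom C (ccod C e) (cdom C m). ccomp C d' e = u \<and> ccomp C m d' = v \<longrightarrow> d' = d)))"

definition costable :: "('o, 'a) cat \<Rightarrow> 'a set \<Rightarrow> bool" where
  "costable C M \<longleftrightarrow> (\<forall>m \<in> M. \<forall>f p q. is_pushout C m f p q \<longrightarrow> q \<in> M)"

definition is_functor :: "('o, 'a) cat \<Rightarrow> ('p, 'b) cat \<Rightarrow> ('o \<Rightarrow> 'p) \<Rightarrow> ('a \<Rightarrow> 'b) \<Rightarrow> bool" where
  "is_functor C D Fo Fa \<longleftrightarrow>
     (\<forall>x \<in> cobj C. Fo x \<in> cobj D) \<and>
     (\<forall>f \<in> carr C. Fa f \<in> hom D (Fo (cdom C f)) (Fo (ccod C f))) \<and>
     (\<forall>x \<in> cobj C. Fa (cid C x) = cid D (Fo x)) \<and>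
     (\<forall>f \<in> carr C. \<forall>g \<in> carr C. ccod C f = cdom C g \<longrightarrow>
        Fa (ccomp C g f) = ccomp D (Fa g) (Fa f))"

definition preserves_finite_colimits ::
  "('o, 'a) cat \<Rightarrow> ('p, 'b) cat \<Rightarrow> ('o \<Rightarrow> 'p) \<Rightarrow> ('a \<Rightarrow> 'b) \<Rightarrow> bool" where
  "preserves_finite_colimits C D Fo Fa \<longleftrightarrow>
     (\<forall>I. is_initial C I \<longrightarrow> is_initial D (Fo I)) \<and>
     (\<forall>X Y S i1 i2. is_coproduct C X Y S i1 i2 \<longrightarrow>
        is_coproduct D (Fo X) (Fo Y) (Fo S) (Fa i1) (Fa i2)) \<and>
     (\<forall>f g p q. is_pushout C f g p q \<longrightarrow> is_pushout D (Fa f) (Fa g) (Fa p) (Fa q))"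

text \<open>A cospan X -i-> N <-u- Y is represented by the pair (i, u) with
  X = dom i, Y = dom u, N = cod i = cod u.\<close>
definition is_cospan :: "('u, 'a) cat \<Rightarrow> 'u \<Rightarrow> 'u \<Rightarrow> 'a \<times> 'a \<Rightarrow> bool" where
  "is_cospan C X Y c \<longleftrightarrow> (case c of (i, u) \<Rightarrow>
     i \<in> carr C \<and> u \<in> carr C \<and> cdom C i = X \<and> cdom C u = Y \<and> ccod C i = ccod C u)"

definition cospan_iso :: "('u, 'a) cat \<Rightarrow> 'a \<times> 'a \<Rightarrow> 'a \<times> 'a \<Rightarrow> bool" where
  "cospan_iso C c c' \<longleftrightarrow> (case c of (i, u) \<Rightarrow> case c' of (i', u') \<Rightarrow>
     (\<exists>\<phi> \<in> hom C (ccod C i) (ccod C i'). iso C \<phi> \<and>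
        ccomp C \<phi> i = i' \<and> ccomp C \<phi> u = u'))"

text \<open>(E,M)-corelation X \<rightarrow> Y: a cospan whose copairing [i,u] : X+Y \<rightarrow> N lies in E.\<close>
definition is_corel :: "('u, 'a) cat \<Rightarrow> 'a set \<Rightarrow> 'u \<Rightarrow> 'u \<Rightarrow> 'a \<times> 'a \<Rightarrow> bool" where
  "is_corel C E X Y c \<longleftrightarrow> is_cospan C X Y c \<and> (case c of (i, u) \<Rightarrow>
     (\<exists>S j1 j2 h. is_coproduct C X Y S j1 j2 \<and> h \<in> hom C S (ccod C i) \<and>
        ccomp C h j1 = i \<and> ccomp C h j2 = u \<and> h \<in> E))"

text \<open>c' is an E-part of the cospan c = (i,u): factor [i,u] = m \<circ> e with e \<in> E,
  m \<in> M, and take (e \<circ> \<iota>X, e \<circ> \<iota>Y).\<close>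
definition is_Epart :: "('u, 'a) cat \<Rightarrow> 'a set \<Rightarrow> 'a set \<Rightarrow> 'a \<times> 'a \<Rightarrow> 'a \<times> 'a \<Rightarrow> bool" where
  "is_Epart C E M c c' \<longleftrightarrow> (case c of (i, u) \<Rightarrow> case c' of (i', u') \<Rightarrow>
     is_cospan C (cdom C i) (cdom C u) (i, u) \<and>
     (\<exists>S j1 j2 h e m. is_coproduct C (cdom C i) (cdom C u) S j1 j2 \<and>
        h \<in> hom C S (ccod C i) \<and> ccomp C h j1 = i \<and> ccomp C h j2 = u \<and>
        e \<in> E \<and> m \<in> M \<and> cdom C e = S \<and> ccod C e = cdom C m \<and> ccod C m = ccod C i \<and>
        ccomp C m e = h \<and> i' = ccomp C e j1 \<and> u' = ccomp C e j2))"

definition is_cospan_comp :: "('u, 'a) cat \<Rightarrow> 'a \<times> 'a \<Rightarrow> 'a \<times> 'a \<Rightarrow> 'a \<times> 'a \<Rightarrow> bool" where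
  "is_cospan_comp C c1 c2 c \<longleftrightarrow> (case c1 of (i1, u1) \<Rightarrow> case c2 of (i2, u2) \<Rightarrow>
     case c of (i, u) \<Rightarrow>
     (\<exists>p q. is_pushout C u1 i2 p q \<and> i = ccomp C p i1 \<and> u = ccomp C q u2))"

definition is_corel_comp :: "('u, 'a) cat \<Rightarrow> 'a set \<Rightarrow> 'a set \<Rightarrow> 'a \<times> 'a \<Rightarrow> 'a \<times> 'a \<Rightarrow> 'a \<times> 'a \<Rightarrow> bool" where
  "is_corel_comp C E M c1 c2 c \<longleftrightarrow> (\<exists>k. is_cospan_comp C c1 c2 k \<and> is_Epart C E M k c)"

definition is_box :: "('p, 'b) cat \<Rightarrow> 'b set \<Rightarrow> 'b set \<Rightarrow> ('a \<Rightarrow> 'b) \<Rightarrow> 'a \<times> 'a \<Rightarrow> 'b \<times> 'b \<Rightarrow> bool" where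
  "is_box D E' M' Fa c c' \<longleftrightarrow> (case c of (i, u) \<Rightarrow> is_Epart D E' M' (Fa i, Fa u) c')"

end

(* The corelation composite of f and g is the E-part of their pushout composite k. Because A
   preserves pushouts and maps M into M', the E'-part of A applied to that E-part is an E'-part
   of A k itself. On the other side, the composite of the two boxes is the E'-part of the pushout
   composite of the E'-parts of A f and A g. Pushing that pushout square out along the two
   M'-maps completing these E'-parts yields a pushout composite of A f and A g, hence a cospan
   isomorphic to A k, and the comparison map lies in M' because M' is stable under pushout.
   So both sides are E'-parts of A k, and E'-parts are unique up to isomorphism. *)

theory Submission
  imports Defs
begin

context
  fixes C :: "('o, 'a) cat"
  assumes C: "category C"
begin

lemma comp_in_hom: "f \<in> hom C x y \<Longrightarrow> g \<in> hom C y z \<Longrightarrow> ccomp C g f \<in> hom C x z"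
  using C unfolding category_def hom_def by auto

lemma ccomp_assoc:
  "f \<in> hom C x y \<Longrightarrow> g \<in> hom C y z \<Longrightarrow> h \<in> hom C z w \<Longrightarrow>
   ccomp C h (ccomp C g f) = ccomp C (ccomp C h g) f"
  using C unfolding category_def hom_def by auto

lemma cod_in_obj: "f \<in> hom C x y \<Longrightarrow> y \<in> cobj C"
  using C unfolding category_def hom_def by auto

lemma id_in_hom: "x \<in> cobj C \<Longrightarrow> cid C x \<in> hom C x x"
  using C unfolding category_def by auto

lemma comp_id_left: "f \<in> hom C x y \<Longrightarrow> ccomp C (cid C y) f = f"
  using C unfolding category_def hom_def by auto

lemma comp_id_right: "f \<in> hom C x y \<Longrightarrow> ccomp C f (cid C x) = f"
  using C unfolding category_def hom_def by auto

lemma isoI: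
  assumes "f \<in> hom C x y" "g \<in> hom C y x"
    and "ccomp C g f = cid C x" "ccomp C f g = cid C y"
  shows "iso C f"
  using assms unfolding iso_def hom_def by auto

end

section \<open>Pushouts and coproducts\<close>

lemma is_pushout_sym:
  assumes "is_pushout C f g p q"
  shows "is_pushout C g f q p"
  unfolding is_pushout_def
proof (intro conjI allI impI)
  fix T u v
  assume "u \<in> hom C (ccod C g) T" "v \<in> hom C (ccod C f) T" "ccomp C u g = ccomp C v f"
  with assms show "\<exists>h\<in>hom C (ccod C q) T. ccomp C h q = u \<and> ccomp C h p = v \<and>
      (\<forall>h'\<in>hom C (ccod C q) T. ccomp C h' q = u \<and> ccomp C h' p = v \<longrightarrow> h' = h)"
    unfolding is_pushout_def by metis
qed (use assms in \<open>auto simp: is_pushout_def hom_def\<close>)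

lemma is_pushoutD:
  assumes "is_pushout C f g p q"
  shows "f \<in> hom C (cdom C f) (ccod C f)" "g \<in> hom C (cdom C f) (ccod C g)"
    and "p \<in> hom C (ccod C f) (ccod C p)" "q \<in> hom C (ccod C g) (ccod C p)"
    and "ccomp C p f = ccomp C q g"
  using assms unfolding is_pushout_def hom_def by auto

lemma is_pushout_universal:
  assumes "is_pushout C f g p q" "u \<in> hom C (ccod C f) T" "v \<in> hom C (ccod C g) T"
    and "ccomp C u f = ccomp C v g"
  obtains h where "h \<in> hom C (ccod C p) T" "ccomp C h p = u" "ccomp C h q = v"
  using assms unfolding is_pushout_def by blast

lemma is_coproduct_universal:
  assumes "is_coproduct C X Y S j1 j2" "f \<in> hom C X T" "g \<in> hom C Y T"
  obtains h where "h \<in> hom C S T" "ccomp C h j1 = f" "ccomp C h j2 = g"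
  using assms unfolding is_coproduct_def by blast

context
  fixes C :: "('o, 'a) cat"
  assumes C: "category C"
begin

lemma pushout_maps_eq:
  assumes P: "is_pushout C f g p q"
    and h: "h \<in> hom C (ccod C p) T" and h': "h' \<in> hom C (ccod C p) T"
    and "ccomp C h p = ccomp C h' p" "ccomp C h q = ccomp C h' q"
  shows "h = h'"
proof -
  note P' = is_pushoutD[OF P]
  have "ccomp C h p \<in> hom C (ccod C f) T" "ccomp C h q \<in> hom C (ccod C g) T"
    using comp_in_hom[OF C] P' h by blast+
  moreover have "ccomp C (ccomp C h p) f = ccomp C (ccomp C h q) g"
    using P' h by (metis C ccomp_assoc)
  ultimately obtain h0 where "\<forall>h'\<in>hom C (ccod C p) T.
      ccomp C h' p = ccomp C h p \<and> ccomp C h' q = ccomp C h q \<longrightarrow> h' = h0"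
    using P unfolding is_pushout_def by blast
  then show ?thesis using assms by metis
qed

lemma coproduct_maps_eq:
  assumes S: "is_coproduct C X Y S j1 j2"
    and h: "h \<in> hom C S T" and h': "h' \<in> hom C S T"
    and "ccomp C h j1 = ccomp C h' j1" "ccomp C h j2 = ccomp C h' j2"
  shows "h = h'"
proof -
  have "j1 \<in> hom C X S" "j2 \<in> hom C Y S"
    using S unfolding is_coproduct_def by auto
  then have "ccomp C h j1 \<in> hom C X T" "ccomp C h j2 \<in> hom C Y T"
    using comp_in_hom[OF C] h by blast+
  then obtain h0 where "\<forall>h'\<in>hom C S T.
      ccomp C h' j1 = ccomp C h j1 \<and> ccomp C h' j2 = ccomp C h j2 \<longrightarrow> h' = h0"
    using S unfolding is_coproduct_def by blast
  then show ?thesis using assms by metis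
qed

lemma pushout_unique_up_to_iso:
  assumes P1: "is_pushout C f g p1 q1" and P2: "is_pushout C f g p2 q2"
  shows "\<exists>\<phi>\<in>hom C (ccod C p1) (ccod C p2). iso C \<phi> \<and> ccomp C \<phi> p1 = p2 \<and> ccomp C \<phi> q1 = q2"
proof -
  note P1' = is_pushoutD[OF P1] and P2' = is_pushoutD[OF P2]
  obtain \<phi> where \<phi>: "\<phi> \<in> hom C (ccod C p1) (ccod C p2)" "ccomp C \<phi> p1 = p2" "ccomp C \<phi> q1 = q2"
    using is_pushout_universal[OF P1 P2'(3,4,5)] by blast
  obtain \<psi> where \<psi>: "\<psi> \<in> hom C (ccod C p2) (ccod C p1)" "ccomp C \<psi> p2 = p1" "ccomp C \<psi> q2 = q1"
    using is_pushout_universal[OF P2 P1'(3,4,5)] by blast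
  have "ccomp C \<psi> \<phi> = cid C (ccod C p1)"
    using pushout_maps_eq[OF P1 comp_in_hom[OF C \<phi>(1) \<psi>(1)] id_in_hom[OF C cod_in_obj[OF C \<psi>(1)]]]
    by (metis C P1'(3,4) \<phi> \<psi> ccomp_assoc comp_id_left)
  moreover have "ccomp C \<phi> \<psi> = cid C (ccod C p2)"
    using pushout_maps_eq[OF P2 comp_in_hom[OF C \<psi>(1) \<phi>(1)] id_in_hom[OF C cod_in_obj[OF C \<phi>(1)]]]
    by (metis C P2'(3,4) \<phi> \<psi> ccomp_assoc comp_id_left)
  ultimately show ?thesis
    using isoI[OF C \<phi>(1) \<psi>(1)] \<phi> by blast
qed

lemma coproduct_unique_up_to_iso:
  assumes S: "is_coproduct C X Y S j1 j2" and S': "is_coproduct C X Y S' j1' j2'"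
  shows "\<exists>\<sigma>\<in>hom C S S'. iso C \<sigma> \<and> ccomp C \<sigma> j1 = j1' \<and> ccomp C \<sigma> j2 = j2'"
proof -
  have j: "j1 \<in> hom C X S" "j2 \<in> hom C Y S" and j': "j1' \<in> hom C X S'" "j2' \<in> hom C Y S'"
    using S S' unfolding is_coproduct_def by auto
  obtain \<sigma> where \<sigma>: "\<sigma> \<in> hom C S S'" "ccomp C \<sigma> j1 = j1'" "ccomp C \<sigma> j2 = j2'"
    using is_coproduct_universal[OF S j'] by blast
  obtain \<tau> where \<tau>: "\<tau> \<in> hom C S' S" "ccomp C \<tau> j1' = j1" "ccomp C \<tau> j2' = j2"
    using is_coproduct_universal[OF S' j] by blast
  have "ccomp C \<tau> \<sigma> = cid C S"
    using coproduct_maps_eq[OF S comp_in_hom[OF C \<sigma>(1) \<tau>(1)] id_in_hom[OF C cod_in_obj[OF C j(1)]]]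
    by (metis C j \<sigma> \<tau> ccomp_assoc comp_id_left)
  moreover have "ccomp C \<sigma> \<tau> = cid C S'"
    using coproduct_maps_eq[OF S' comp_in_hom[OF C \<tau>(1) \<sigma>(1)] id_in_hom[OF C cod_in_obj[OF C j'(1)]]]
    by (metis C j' \<sigma> \<tau> ccomp_assoc comp_id_left)
  ultimately show ?thesis
    using isoI[OF C \<sigma>(1) \<tau>(1)] \<sigma> by blast
qed

lemma is_pushoutI:
  assumes "f \<in> hom C W A" "g \<in> hom C W B" "p \<in> hom C A R" "q \<in> hom C B R"
    and "ccomp C p f = ccomp C q g"
    and exists: "\<And>T u v. u \<in> hom C A T \<Longrightarrow> v \<in> hom C B T \<Longrightarrow> ccomp C u f = ccomp C v g \<Longrightarrow>
      \<exists>h\<in>hom C R T. ccomp C h p = u \<and> ccomp C h q = v"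
    and unique: "\<And>T h h'. h \<in> hom C R T \<Longrightarrow> h' \<in> hom C R T \<Longrightarrow>
      ccomp C h p = ccomp C h' p \<Longrightarrow> ccomp C h q = ccomp C h' q \<Longrightarrow> h = h'"
  shows "is_pushout C f g p q"
  unfolding is_pushout_def
proof (intro conjI allI impI)
  fix T u v
  assume "u \<in> hom C (ccod C f) T" "v \<in> hom C (ccod C g) T" "ccomp C u f = ccomp C v g"
  then obtain h where "h \<in> hom C R T" "ccomp C h p = u" "ccomp C h q = v"
    using assms(1-4) exists by (auto simp: hom_def)
  then show "\<exists>h\<in>hom C (ccod C p) T. ccomp C h p = u \<and> ccomp C h q = v \<and>
      (\<forall>h'\<in>hom C (ccod C p) T. ccomp C h' p = u \<and> ccomp C h' q = v \<longrightarrow> h' = h)"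
    using assms(3) unique by (auto simp: hom_def)
qed (use assms(1-5) in \<open>auto simp: hom_def\<close>)

lemma pushout_paste:
  assumes P1: "is_pushout C b a P Q" and P2: "is_pushout C m P s t"
  shows "is_pushout C (ccomp C m b) a s (ccomp C t Q)"
proof -
  note P1' = is_pushoutD[OF P1] and P2' = is_pushoutD[OF P2]
  define W A B R A' R' where "W = cdom C b" "A = ccod C b" "B = ccod C a" "R = ccod C P"
    "A' = ccod C m" "R' = ccod C s"
  have b: "b \<in> hom C W A" and a: "a \<in> hom C W B" and P: "P \<in> hom C A R" and Q: "Q \<in> hom C B R"
    using P1' unfolding W_A_B_R_A'_R'_def by (auto simp: hom_def)
  have m: "m \<in> hom C A A'" and s: "s \<in> hom C A' R'" and t: "t \<in> hom C R R'"
    using P1'(3) P2' unfolding W_A_B_R_A'_R'_def by (auto simp: hom_def)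
  have mb: "ccomp C m b \<in> hom C W A'" and tQ: "ccomp C t Q \<in> hom C B R'"
    using comp_in_hom[OF C b m] comp_in_hom[OF C Q t] .
  have sm: "ccomp C s m = ccomp C t P" and Pb: "ccomp C P b = ccomp C Q a"
    using P2'(5) P1'(5) .
  show ?thesis
  proof (rule is_pushoutI[OF mb a s tQ])
    have "ccomp C s (ccomp C m b) = ccomp C t (ccomp C P b)"
      using ccomp_assoc[OF C b m s] ccomp_assoc[OF C b P t] sm by simp
    also have "\<dots> = ccomp C (ccomp C t Q) a"
      using ccomp_assoc[OF C a Q t] Pb by simp
    finally show "ccomp C s (ccomp C m b) = ccomp C (ccomp C t Q) a" .
  next
    fix T u v
    assume u: "u \<in> hom C A' T" and v: "v \<in> hom C B T"
      and uv: "ccomp C u (ccomp C m b) = ccomp C v a"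
    have um: "ccomp C u m \<in> hom C A T"
      using comp_in_hom[OF C m u] .
    obtain h1 where h1: "h1 \<in> hom C R T" "ccomp C h1 P = ccomp C u m" "ccomp C h1 Q = v"
      using is_pushout_universal[OF P1, of "ccomp C u m" T v] um v uv ccomp_assoc[OF C b m u]
      unfolding W_A_B_R_A'_R'_def by auto
    obtain h where h: "h \<in> hom C R' T" "ccomp C h s = u" "ccomp C h t = h1"
      using is_pushout_universal[OF P2, of u T h1] u h1 P1'(3) P2'(1,2)
      unfolding W_A_B_R_A'_R'_def by (auto simp: hom_def)
    have "ccomp C h (ccomp C t Q) = v"
      using ccomp_assoc[OF C Q t h(1)] h h1 by simp
    with h show "\<exists>h\<in>hom C R' T. ccomp C h s = u \<and> ccomp C h (ccomp C t Q) = v"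
      by blast
  next
    fix T h h'
    assume h: "h \<in> hom C R' T" and h': "h' \<in> hom C R' T"
      and eq_s: "ccomp C h s = ccomp C h' s"
      and eq_tQ: "ccomp C h (ccomp C t Q) = ccomp C h' (ccomp C t Q)"
    have "ccomp C h t = ccomp C h' t"
    proof (rule pushout_maps_eq[OF P1])
      show "ccomp C h t \<in> hom C (ccod C P) T" "ccomp C h' t \<in> hom C (ccod C P) T"
        using comp_in_hom[OF C t h] comp_in_hom[OF C t h'] unfolding W_A_B_R_A'_R'_def .
      show "ccomp C (ccomp C h t) P = ccomp C (ccomp C h' t) P"
        using ccomp_assoc[OF C P t h] ccomp_assoc[OF C P t h'] ccomp_assoc[OF C m s h]
          ccomp_assoc[OF C m s h'] eq_s sm by metis
      show "ccomp C (ccomp C h t) Q = ccomp C (ccomp C h' t) Q"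
        using ccomp_assoc[OF C Q t h] ccomp_assoc[OF C Q t h'] eq_tQ by simp
    qed
    then show "h = h'"
      using pushout_maps_eq[OF P2 _ _ eq_s] h h' unfolding W_A_B_R_A'_R'_def by blast
  qed
qed

end

section \<open>Factorisation systems and E-parts\<close>

lemma factorisation_systemD:
  assumes "factorisation_system C E M"
  shows "E \<subseteq> carr C" "M \<subseteq> carr C" "iso C f \<Longrightarrow> f \<in> E" "iso C f \<Longrightarrow> f \<in> M"
    and "e1 \<in> E \<Longrightarrow> e2 \<in> E \<Longrightarrow> ccod C e1 = cdom C e2 \<Longrightarrow> ccomp C e2 e1 \<in> E"
    and "m1 \<in> M \<Longrightarrow> m2 \<in> M \<Longrightarrow> ccod C m1 = cdom C m2 \<Longrightarrow> ccomp C m2 m1 \<in> M"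
  using assms unfolding factorisation_system_def by blast+

lemma factorisation_system_lift:
  assumes "factorisation_system C E M" "e \<in> E" "m \<in> M"
    and "u \<in> hom C (cdom C e) (cdom C m)" "v \<in> hom C (ccod C e) (ccod C m)"
    and "ccomp C m u = ccomp C v e"
  obtains d where "d \<in> hom C (ccod C e) (cdom C m)" "ccomp C d e = u" "ccomp C m d = v"
  using assms unfolding factorisation_system_def by metis

lemma factorisation_system_homs:
  assumes "factorisation_system C E M"
  shows "e \<in> E \<Longrightarrow> e \<in> hom C (cdom C e) (ccod C e)" "m \<in> M \<Longrightarrow> m \<in> hom C (cdom C m) (ccod C m)"
  using factorisation_systemD(1,2)[OF assms] by (auto simp: hom_def)

context
  fixes C :: "('o, 'a) cat"
  assumes C: "category C"
begin

lemma factorisation_system_lift_unique: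
  assumes FS: "factorisation_system C E M" and "e \<in> E" "m \<in> M"
    and d: "d \<in> hom C (ccod C e) (cdom C m)" and d': "d' \<in> hom C (ccod C e) (cdom C m)"
    and "ccomp C d e = ccomp C d' e" "ccomp C m d = ccomp C m d'"
  shows "d = d'"
proof -
  note e = factorisation_system_homs(1)[OF FS \<open>e \<in> E\<close>]
    and m = factorisation_system_homs(2)[OF FS \<open>m \<in> M\<close>]
  have "ccomp C d e \<in> hom C (cdom C e) (cdom C m)" "ccomp C m d \<in> hom C (ccod C e) (ccod C m)"
    using comp_in_hom[OF C] e m d by blast+
  moreover have "ccomp C m (ccomp C d e) = ccomp C (ccomp C m d) e"
    using ccomp_assoc[OF C e d m] .
  ultimately obtain d0 where "\<forall>d'\<in>hom C (ccod C e) (cdom C m).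
      ccomp C d' e = ccomp C d e \<and> ccomp C m d' = ccomp C m d \<longrightarrow> d' = d0"
    using FS \<open>e \<in> E\<close> \<open>m \<in> M\<close> unfolding factorisation_system_def by blast
  then show ?thesis using assms by metis
qed

lemma factorisation_unique_up_to_iso:
  assumes FS: "factorisation_system C E M"
    and e1: "e1 \<in> E" "e1 \<in> hom C S N1" and n1: "n1 \<in> M" "n1 \<in> hom C N1 K"
    and e2: "e2 \<in> E" "e2 \<in> hom C S N2" and n2: "n2 \<in> M" "n2 \<in> hom C N2 K"
    and eq: "ccomp C n1 e1 = ccomp C n2 e2"
  shows "\<exists>d\<in>hom C N1 N2. iso C d \<and> ccomp C d e1 = e2 \<and> ccomp C n2 d = n1"
proof -
  have dom_cod: "cdom C e1 = S" "ccod C e1 = N1" "cdom C n1 = N1" "ccod C n1 = K"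
    "cdom C e2 = S" "ccod C e2 = N2" "cdom C n2 = N2" "ccod C n2 = K"
    using e1 e2 n1 n2 by (auto simp: hom_def)
  obtain d where d: "d \<in> hom C N1 N2" "ccomp C d e1 = e2" "ccomp C n2 d = n1"
    using factorisation_system_lift[OF FS e1(1) n2(1), of e2 n1] e2 n1 eq dom_cod by auto
  obtain d' where d': "d' \<in> hom C N2 N1" "ccomp C d' e2 = e1" "ccomp C n1 d' = n2"
    using factorisation_system_lift[OF FS e2(1) n1(1), of e1 n2] e1 n2 eq dom_cod by auto
  have "ccomp C d' d = cid C N1"
    using factorisation_system_lift_unique[OF FS e1(1) n1(1), unfolded dom_cod,
        OF _ id_in_hom[OF C cod_in_obj[OF C e1(2)]]]
      comp_in_hom[OF C d(1) d'(1)] dom_cod d d' e1 n1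
    by (metis C ccomp_assoc comp_id_left comp_id_right)
  moreover have "ccomp C d d' = cid C N2"
    using factorisation_system_lift_unique[OF FS e2(1) n2(1), unfolded dom_cod,
        OF _ id_in_hom[OF C cod_in_obj[OF C e2(2)]]]
      comp_in_hom[OF C d'(1) d(1)] dom_cod d d' e2 n2
    by (metis C ccomp_assoc comp_id_left comp_id_right)
  ultimately show ?thesis
    using isoI[OF C d(1) d'(1)] d by blast
qed

lemma is_EpartE:
  assumes FS: "factorisation_system C E M" and "is_Epart C E M (i, u) c"
  obtains S j1 j2 e n where "is_coproduct C (cdom C i) (cdom C u) S j1 j2"
    and "e \<in> E" "n \<in> M" "e \<in> hom C S (cdom C n)" "n \<in> hom C (cdom C n) (ccod C i)"
    and "c = (ccomp C e j1, ccomp C e j2)"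
    and "ccomp C n (ccomp C e j1) = i" "ccomp C n (ccomp C e j2) = u"
proof -
  obtain S j1 j2 h e n where S: "is_coproduct C (cdom C i) (cdom C u) S j1 j2"
    and h: "h \<in> hom C S (ccod C i)" "ccomp C h j1 = i" "ccomp C h j2 = u"
    and en: "e \<in> E" "n \<in> M" "cdom C e = S" "ccod C e = cdom C n" "ccod C n = ccod C i"
      "ccomp C n e = h"
    and c: "c = (ccomp C e j1, ccomp C e j2)"
    using assms(2) unfolding is_Epart_def by (cases c) auto
  have e: "e \<in> hom C S (cdom C n)" and n: "n \<in> hom C (cdom C n) (ccod C i)"
    using en factorisation_system_homs[OF FS] by (auto simp: hom_def)
  have "j1 \<in> hom C (cdom C i) S" "j2 \<in> hom C (cdom C u) S"
    using S unfolding is_coproduct_def by auto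
  then have "ccomp C n (ccomp C e j1) = i" "ccomp C n (ccomp C e j2) = u"
    using ccomp_assoc[OF C _ e n] h en by metis+
  with S en e n c show thesis by (intro that)
qed

lemma is_EpartI:
  assumes S: "is_coproduct C X Y S j1 j2" and "e \<in> E" "n \<in> M"
    and e: "e \<in> hom C S N" and n: "n \<in> hom C N K"
  shows "is_Epart C E M (ccomp C n (ccomp C e j1), ccomp C n (ccomp C e j2))
    (ccomp C e j1, ccomp C e j2)"
proof -
  have j: "j1 \<in> hom C X S" "j2 \<in> hom C Y S"
    using S unfolding is_coproduct_def by auto
  have i: "ccomp C n (ccomp C e j1) \<in> hom C X K" and u: "ccomp C n (ccomp C e j2) \<in> hom C Y K"
    using comp_in_hom[OF C] j e n by blast+
  have "ccomp C (ccomp C n e) j1 = ccomp C n (ccomp C e j1)"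
    "ccomp C (ccomp C n e) j2 = ccomp C n (ccomp C e j2)"
    using ccomp_assoc[OF C _ e n] j by metis+
  moreover have "ccomp C n e \<in> carr C" "cdom C (ccomp C n e) = S" "ccod C (ccomp C n e) = K"
    and "cdom C e = S" "ccod C e = cdom C n" "ccod C n = K"
    using comp_in_hom[OF C e n] e n by (auto simp: hom_def)
  moreover have "cdom C (ccomp C n (ccomp C e j1)) = X" "cdom C (ccomp C n (ccomp C e j2)) = Y"
    and "ccod C (ccomp C n (ccomp C e j1)) = K" "ccod C (ccomp C n (ccomp C e j2)) = K"
    using i u by (auto simp: hom_def)
  ultimately show ?thesis
    unfolding is_Epart_def is_cospan_def prod.case
    using S assms(2,3) i u by (simp add: hom_def) blast
qed

lemma Epart_postcomp_M:
  assumes FS: "factorisation_system C E M" and c: "is_Epart C E M (i, u) c"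
    and "m \<in> M" and m: "m \<in> hom C (ccod C i) K"
  shows "is_Epart C E M (ccomp C m i, ccomp C m u) c"
proof -
  obtain S j1 j2 e n where S: "is_coproduct C (cdom C i) (cdom C u) S j1 j2"
    and en: "e \<in> E" "n \<in> M" "e \<in> hom C S (cdom C n)" "n \<in> hom C (cdom C n) (ccod C i)"
    and c: "c = (ccomp C e j1, ccomp C e j2)"
    and i: "ccomp C n (ccomp C e j1) = i" and u: "ccomp C n (ccomp C e j2) = u"
    using is_EpartE[OF FS c] by blast
  have mn: "ccomp C m n \<in> M" "ccomp C m n \<in> hom C (cdom C n) K"
    using factorisation_systemD(6)[OF FS en(2) \<open>m \<in> M\<close>] comp_in_hom[OF C en(4) m] m en(4)
    by (auto simp: hom_def)
  have j: "j1 \<in> hom C (cdom C i) S" "j2 \<in> hom C (cdom C u) S"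
    using S unfolding is_coproduct_def by auto
  have "ccomp C (ccomp C m n) (ccomp C e j1) = ccomp C m i"
    "ccomp C (ccomp C m n) (ccomp C e j2) = ccomp C m u"
    using ccomp_assoc[OF C comp_in_hom[OF C _ en(3)] en(4) m] j i u by metis+
  then show ?thesis
    using is_EpartI[OF S en(1) mn(1) en(3) mn(2)] c by simp
qed

lemma Epart_unique:
  assumes FS: "factorisation_system C E M"
    and c1: "is_Epart C E M (i, u) c1" and c2: "is_Epart C E M (i, u) c2"
  shows "cospan_iso C c1 c2"
proof -
  obtain S j1 j2 e1 n1 where S: "is_coproduct C (cdom C i) (cdom C u) S j1 j2"
    and en1: "e1 \<in> E" "n1 \<in> M" "e1 \<in> hom C S (cdom C n1)" "n1 \<in> hom C (cdom C n1) (ccod C i)"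
    and c1: "c1 = (ccomp C e1 j1, ccomp C e1 j2)"
    and i1: "ccomp C n1 (ccomp C e1 j1) = i" and u1: "ccomp C n1 (ccomp C e1 j2) = u"
    using is_EpartE[OF FS c1] by blast
  obtain S' j1' j2' e2 n2 where S': "is_coproduct C (cdom C i) (cdom C u) S' j1' j2'"
    and en2: "e2 \<in> E" "n2 \<in> M" "e2 \<in> hom C S' (cdom C n2)" "n2 \<in> hom C (cdom C n2) (ccod C i)"
    and c2: "c2 = (ccomp C e2 j1', ccomp C e2 j2')"
    and i2: "ccomp C n2 (ccomp C e2 j1') = i" and u2: "ccomp C n2 (ccomp C e2 j2') = u"
    using is_EpartE[OF FS c2] by blast
  obtain \<sigma> where \<sigma>: "\<sigma> \<in> hom C S S'" "iso C \<sigma>" "ccomp C \<sigma> j1 = j1'" "ccomp C \<sigma> j2 = j2'"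
    using coproduct_unique_up_to_iso[OF C S S'] by blast
  have j: "j1 \<in> hom C (cdom C i) S" "j2 \<in> hom C (cdom C u) S"
    and j': "j1' \<in> hom C (cdom C i) S'" "j2' \<in> hom C (cdom C u) S'"
    using S S' unfolding is_coproduct_def by auto
  have e2\<sigma>: "ccomp C e2 \<sigma> \<in> E" "ccomp C e2 \<sigma> \<in> hom C S (cdom C n2)"
    using factorisation_systemD(3,5)[OF FS] \<sigma> en2 comp_in_hom[OF C \<sigma>(1) en2(3)]
    by (auto simp: hom_def)
  have e2\<sigma>_j: "ccomp C (ccomp C e2 \<sigma>) j1 = ccomp C e2 j1'" "ccomp C (ccomp C e2 \<sigma>) j2 = ccomp C e2 j2'"
    using ccomp_assoc[OF C j(1) \<sigma>(1) en2(3)] ccomp_assoc[OF C j(2) \<sigma>(1) en2(3)] \<sigma>(3,4) by simp_all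
  \<comment> \<open>the two factorisations of the copairing \<open>[i, u]\<close>, compared over the same coproduct \<open>S\<close>\<close>
  have "ccomp C n1 e1 = ccomp C n2 (ccomp C e2 \<sigma>)"
  proof (rule coproduct_maps_eq[OF C S comp_in_hom[OF C en1(3,4)] comp_in_hom[OF C e2\<sigma>(2) en2(4)]])
    show "ccomp C (ccomp C n1 e1) j1 = ccomp C (ccomp C n2 (ccomp C e2 \<sigma>)) j1"
      using ccomp_assoc[OF C j(1) en1(3,4)] ccomp_assoc[OF C j(1) e2\<sigma>(2) en2(4)] e2\<sigma>_j i1 i2
      by simp
    show "ccomp C (ccomp C n1 e1) j2 = ccomp C (ccomp C n2 (ccomp C e2 \<sigma>)) j2"
      using ccomp_assoc[OF C j(2) en1(3,4)] ccomp_assoc[OF C j(2) e2\<sigma>(2) en2(4)] e2\<sigma>_j u1 u2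
      by simp
  qed
  then obtain d where d: "d \<in> hom C (cdom C n1) (cdom C n2)" "iso C d" "ccomp C d e1 = ccomp C e2 \<sigma>"
    using factorisation_unique_up_to_iso[OF FS en1(1,3,2,4) e2\<sigma>(1,2) en2(2,4)] by blast
  have "ccomp C d (ccomp C e1 j1) = ccomp C e2 j1'" "ccomp C d (ccomp C e1 j2) = ccomp C e2 j2'"
    using ccomp_assoc[OF C j(1) en1(3) d(1)] ccomp_assoc[OF C j(2) en1(3) d(1)] d(3) e2\<sigma>_j
    by simp_all
  moreover have "ccod C (ccomp C e1 j1) = cdom C n1" "ccod C (ccomp C e2 j1') = cdom C n2"
    using comp_in_hom[OF C j(1) en1(3)] comp_in_hom[OF C j'(1) en2(3)] by (auto simp: hom_def)
  ultimately show ?thesis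
    unfolding cospan_iso_def c1 c2 using d by auto
qed

lemma Epart_cospan_iso:
  assumes FS: "factorisation_system C E M"
    and r: "is_Epart C E M k r" and k: "cospan_iso C k k'"
  shows "is_Epart C E M k' r"
proof -
  obtain i u i' u' where kk: "k = (i, u)" "k' = (i', u')"
    by (cases k, cases k')
  obtain \<phi> where \<phi>: "\<phi> \<in> hom C (ccod C i) (ccod C i')" "iso C \<phi>"
    and i': "ccomp C \<phi> i = i'" and u': "ccomp C \<phi> u = u'"
    using k unfolding cospan_iso_def kk by auto
  show ?thesis
    using Epart_postcomp_M[OF FS r[unfolded kk(1)] factorisation_systemD(4)[OF FS \<phi>(2)] \<phi>(1)]
    unfolding kk i' u' .
qed

lemma pushout_exists:
  assumes "has_finite_colimits C" "f \<in> hom C W A" "g \<in> hom C W B"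
  obtains p q where "is_pushout C f g p q"
proof -
  have "f \<in> carr C" "g \<in> carr C" "cdom C f = cdom C g"
    using assms(2,3) by (auto simp: hom_def)
  then show thesis
    using assms(1) that unfolding has_finite_colimits_def by blast
qed

lemma pushout_along_M_pair:
  assumes FS: "factorisation_system C E M" and CS: "costable C M"
    and colim: "has_finite_colimits C"
    and P: "is_pushout C x y P Q"
    and n1: "n1 \<in> M" "n1 \<in> hom C (ccod C x) A" and n2: "n2 \<in> M" "n2 \<in> hom C (ccod C y) B"
  obtains p q t where "is_pushout C (ccomp C n1 x) (ccomp C n2 y) p q"
    and "t \<in> M" "t \<in> hom C (ccod C P) (ccod C p)"
    and "ccomp C t P = ccomp C p n1" "ccomp C t Q = ccomp C q n2"
proof -
  note P' = is_pushoutD[OF P]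
  obtain s t1 where P1: "is_pushout C n1 P s t1"
    using pushout_exists[OF colim n1(2) P'(3)] .
  note P1' = is_pushoutD[OF P1]
  have s: "s \<in> hom C A (ccod C s)" and t1: "t1 \<in> hom C (ccod C P) (ccod C s)"
    using P1'(3,4) n1(2) by (auto simp: hom_def)
  have t1Q: "ccomp C t1 Q \<in> hom C (ccod C y) (ccod C s)"
    using comp_in_hom[OF C P'(4) t1] .
  obtain s2 t2 where P2: "is_pushout C n2 (ccomp C t1 Q) s2 t2"
    using pushout_exists[OF colim n2(2) t1Q] .
  note P2' = is_pushoutD[OF P2]
  have s2: "s2 \<in> hom C B (ccod C s2)" and t2: "t2 \<in> hom C (ccod C s) (ccod C s2)"
    using P2'(3,4) n2(2) t1Q by (auto simp: hom_def)
  have "t1 \<in> M" "t2 \<in> M"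
    using CS P1 P2 n1(1) n2(1) unfolding costable_def by blast+
  then have "ccomp C t2 t1 \<in> M"
    using factorisation_systemD(6)[OF FS] t1 t2 by (auto simp: hom_def)
  moreover have "is_pushout C (ccomp C n1 x) (ccomp C n2 y) (ccomp C t2 s) s2"
    using is_pushout_sym[OF pushout_paste[OF C is_pushout_sym[OF pushout_paste[OF C P P1]] P2]] .
  moreover have "ccomp C t2 t1 \<in> hom C (ccod C P) (ccod C (ccomp C t2 s))"
    using comp_in_hom[OF C t1 t2] comp_in_hom[OF C s t2] by (auto simp: hom_def)
  moreover have "ccomp C (ccomp C t2 t1) P = ccomp C (ccomp C t2 s) n1"
    using ccomp_assoc[OF C P'(3) t1 t2] ccomp_assoc[OF C n1(2) s t2] P1'(5) by simp
  moreover have "ccomp C (ccomp C t2 t1) Q = ccomp C s2 n2"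
    using ccomp_assoc[OF C P'(4) t1 t2] P2'(5) by simp
  ultimately show thesis
    by (intro that)
qed

lemma Epart_of_cospan_comp:
  assumes FS: "factorisation_system C E M" and CS: "costable C M"
    and colim: "has_finite_colimits C"
    and c1: "is_Epart C E M (i1, u1) c1" and c2: "is_Epart C E M (i2, u2) c2"
    and r: "is_corel_comp C E M c1 c2 r"
  shows "\<exists>k. is_cospan_comp C (i1, u1) (i2, u2) k \<and> is_Epart C E M k r"
proof -
  obtain S1 a1 b1 e1 n1 where S1: "is_coproduct C (cdom C i1) (cdom C u1) S1 a1 b1"
    and en1: "e1 \<in> E" "n1 \<in> M" "e1 \<in> hom C S1 (cdom C n1)" "n1 \<in> hom C (cdom C n1) (ccod C i1)"
    and c1: "c1 = (ccomp C e1 a1, ccomp C e1 b1)"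
    and i1: "ccomp C n1 (ccomp C e1 a1) = i1" and u1: "ccomp C n1 (ccomp C e1 b1) = u1"
    using is_EpartE[OF FS c1] by blast
  obtain S2 a2 b2 e2 n2 where S2: "is_coproduct C (cdom C i2) (cdom C u2) S2 a2 b2"
    and en2: "e2 \<in> E" "n2 \<in> M" "e2 \<in> hom C S2 (cdom C n2)" "n2 \<in> hom C (cdom C n2) (ccod C i2)"
    and c2: "c2 = (ccomp C e2 a2, ccomp C e2 b2)"
    and i2: "ccomp C n2 (ccomp C e2 a2) = i2" and u2: "ccomp C n2 (ccomp C e2 b2) = u2"
    using is_EpartE[OF FS c2] by blast
  obtain P Q where P: "is_pushout C (ccomp C e1 b1) (ccomp C e2 a2) P Q"
    and r: "is_Epart C E M (ccomp C P (ccomp C e1 a1), ccomp C Q (ccomp C e2 b2)) r"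
    using r unfolding is_corel_comp_def is_cospan_comp_def c1 c2 by auto
  have ea1: "ccomp C e1 a1 \<in> hom C (cdom C i1) (cdom C n1)"
    and eb1: "ccomp C e1 b1 \<in> hom C (cdom C u1) (cdom C n1)"
    and ea2: "ccomp C e2 a2 \<in> hom C (cdom C i2) (cdom C n2)"
    and eb2: "ccomp C e2 b2 \<in> hom C (cdom C u2) (cdom C n2)"
    using S1 S2 en1(3) en2(3) comp_in_hom[OF C] unfolding is_coproduct_def by blast+
  have "n1 \<in> hom C (ccod C (ccomp C e1 b1)) (ccod C i1)" "n2 \<in> hom C (ccod C (ccomp C e2 a2)) (ccod C i2)"
    using en1(4) en2(4) eb1 ea2 by (auto simp: hom_def)
  then obtain p q t where pq: "is_pushout C u1 i2 p q"
    and t: "t \<in> M" "t \<in> hom C (ccod C P) (ccod C p)"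
    and tP: "ccomp C t P = ccomp C p n1" and tQ: "ccomp C t Q = ccomp C q n2"
    using pushout_along_M_pair[OF FS CS colim P en1(2) _ en2(2)] u1 i2 by blast
  note P' = is_pushoutD[OF P] and pq' = is_pushoutD[OF pq]
  have P_hom: "P \<in> hom C (cdom C n1) (ccod C P)" and Q_hom: "Q \<in> hom C (cdom C n2) (ccod C P)"
    using P'(3,4) eb1 ea2 by (auto simp: hom_def)
  have p: "p \<in> hom C (ccod C i1) (ccod C p)" and q: "q \<in> hom C (ccod C i2) (ccod C p)"
    using pq'(3,4) en1(4) en2(4) comp_in_hom[OF C eb1 en1(4)] comp_in_hom[OF C ea2 en2(4)] u1 i2
    by (auto simp: hom_def)
  \<comment> \<open>the comparison map \<open>t\<close> lies in \<open>M\<close>, so the E-part of the old composite is one of the new\<close>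
  have "is_Epart C E M (ccomp C t (ccomp C P (ccomp C e1 a1)), ccomp C t (ccomp C Q (ccomp C e2 b2))) r"
    using Epart_postcomp_M[OF FS r t(1)] t(2) comp_in_hom[OF C ea1 P_hom] by (auto simp: hom_def)
  moreover have "ccomp C t (ccomp C P (ccomp C e1 a1)) = ccomp C p i1"
    using ccomp_assoc[OF C ea1 P_hom t(2)] ccomp_assoc[OF C ea1 en1(4) p] tP i1 by simp
  moreover have "ccomp C t (ccomp C Q (ccomp C e2 b2)) = ccomp C q u2"
    using ccomp_assoc[OF C eb2 Q_hom t(2)] ccomp_assoc[OF C eb2 en2(4) q] tQ u2 by simp
  ultimately show ?thesis
    using pq unfolding is_cospan_comp_def by auto
qed

end

section \<open>Images under a colimit-preserving functor\<close>

lemma cospan_comp_unique_up_to_iso: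
  assumes C: "category C"
    and c1: "is_cospan C X Y (i1, u1)" and c2: "is_cospan C Y Z (i2, u2)"
    and k: "is_cospan_comp C (i1, u1) (i2, u2) k" and k': "is_cospan_comp C (i1, u1) (i2, u2) k'"
  shows "cospan_iso C k k'"
proof -
  obtain p q p' q' where P: "is_pushout C u1 i2 p q" and P': "is_pushout C u1 i2 p' q'"
    and kk: "k = (ccomp C p i1, ccomp C q u2)" "k' = (ccomp C p' i1, ccomp C q' u2)"
    using k k' unfolding is_cospan_comp_def by (cases k, cases k') auto
  obtain \<phi> where \<phi>: "\<phi> \<in> hom C (ccod C p) (ccod C p')" "iso C \<phi>"
    and \<phi>p: "ccomp C \<phi> p = p'" and \<phi>q: "ccomp C \<phi> q = q'"
    using pushout_unique_up_to_iso[OF C P P'] by blast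
  note P1 = is_pushoutD[OF P] and P2 = is_pushoutD[OF P']
  have i1: "i1 \<in> hom C X (ccod C u1)" and u2: "u2 \<in> hom C Z (ccod C i2)"
    using c1 c2 unfolding is_cospan_def by (auto simp: hom_def)
  have "ccomp C \<phi> (ccomp C p i1) = ccomp C p' i1" "ccomp C \<phi> (ccomp C q u2) = ccomp C q' u2"
    using ccomp_assoc[OF C i1 P1(3) \<phi>(1)] ccomp_assoc[OF C u2 P1(4) \<phi>(1)] \<phi>p \<phi>q by simp_all
  moreover have "ccod C (ccomp C p i1) = ccod C p" "ccod C (ccomp C p' i1) = ccod C p'"
    using comp_in_hom[OF C i1 P1(3)] comp_in_hom[OF C i1 P2(3)] by (auto simp: hom_def)
  ultimately show ?thesis
    unfolding cospan_iso_def kk using \<phi> by auto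
qed

lemma functor_hom: "is_functor C D Fo Fa \<Longrightarrow> f \<in> hom C x y \<Longrightarrow> Fa f \<in> hom D (Fo x) (Fo y)"
  unfolding is_functor_def hom_def by auto

lemma functor_comp:
  "is_functor C D Fo Fa \<Longrightarrow> f \<in> hom C x y \<Longrightarrow> g \<in> hom C y z \<Longrightarrow>
   Fa (ccomp C g f) = ccomp D (Fa g) (Fa f)"
  unfolding is_functor_def hom_def by auto

lemma functor_cospan:
  "is_functor C D Fo Fa \<Longrightarrow> is_cospan C X Y (i, u) \<Longrightarrow> is_cospan D (Fo X) (Fo Y) (Fa i, Fa u)"
  unfolding is_cospan_def is_functor_def hom_def by auto

lemma functor_cospan_comp:
  assumes F: "is_functor C D Fo Fa" and PF: "preserves_finite_colimits C D Fo Fa"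
    and c1: "is_cospan C X Y (i1, u1)" and c2: "is_cospan C Y Z (i2, u2)"
    and k: "is_cospan_comp C (i1, u1) (i2, u2) (k1, k2)"
  shows "is_cospan_comp D (Fa i1, Fa u1) (Fa i2, Fa u2) (Fa k1, Fa k2)"
proof -
  obtain p q where P: "is_pushout C u1 i2 p q" and kk: "k1 = ccomp C p i1" "k2 = ccomp C q u2"
    using k unfolding is_cospan_comp_def by auto
  note P' = is_pushoutD[OF P]
  have i1: "i1 \<in> hom C X (ccod C u1)" and u2: "u2 \<in> hom C Z (ccod C i2)"
    using c1 c2 unfolding is_cospan_def by (auto simp: hom_def)
  have "is_pushout D (Fa u1) (Fa i2) (Fa p) (Fa q)"
    using PF P unfolding preserves_finite_colimits_def by blast
  moreover have "Fa k1 = ccomp D (Fa p) (Fa i1)" "Fa k2 = ccomp D (Fa q) (Fa u2)"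
    using functor_comp[OF F i1 P'(3)] functor_comp[OF F u2 P'(4)] kk by simp_all
  ultimately show ?thesis
    unfolding is_cospan_comp_def by auto
qed

lemma box_Epart_image:
  assumes C: "category C" and D: "category D"
    and FS: "factorisation_system C E M" and FS': "factorisation_system D E' M'"
    and F: "is_functor C D Fo Fa" and FM: "Fa ` M \<subseteq> M'"
    and c: "is_Epart C E M (k1, k2) c" and b: "is_box D E' M' Fa c b"
  shows "is_Epart D E' M' (Fa k1, Fa k2) b"
proof -
  obtain S j1 j2 e n where S: "is_coproduct C (cdom C k1) (cdom C k2) S j1 j2"
    and en: "e \<in> E" "n \<in> M" "e \<in> hom C S (cdom C n)" "n \<in> hom C (cdom C n) (ccod C k1)"
    and c: "c = (ccomp C e j1, ccomp C e j2)"
    and k1: "ccomp C n (ccomp C e j1) = k1" and k2: "ccomp C n (ccomp C e j2) = k2"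
    using is_EpartE[OF C FS c] by blast
  have ej1: "ccomp C e j1 \<in> hom C (cdom C k1) (cdom C n)"
    and ej2: "ccomp C e j2 \<in> hom C (cdom C k2) (cdom C n)"
    using S en(3) comp_in_hom[OF C] unfolding is_coproduct_def by blast+
  have "Fa n \<in> M'" "Fa n \<in> hom D (ccod D (Fa (ccomp C e j1))) (Fo (ccod C k1))"
    using FM en(2) functor_hom[OF F en(4)] functor_hom[OF F ej1] by (auto simp: hom_def)
  then have "is_Epart D E' M'
      (ccomp D (Fa n) (Fa (ccomp C e j1)), ccomp D (Fa n) (Fa (ccomp C e j2))) b"
    using Epart_postcomp_M[OF D FS'] b unfolding is_box_def c by simp
  then show ?thesis
    using functor_comp[OF F ej1 en(4)] functor_comp[OF F ej2 en(4)] k1 k2 by simp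
qed

theorem mainTheorem5:
  fixes C :: "('o, 'a) cat" and D :: "('p, 'b) cat"
    and E M :: "'a set" and E' M' :: "'b set"
    and Fo :: "'o \<Rightarrow> 'p" and Fa :: "'a \<Rightarrow> 'b"
    and X Y Z :: 'o and f g :: "'a \<times> 'a"
  assumes "category C" and "category D"
    and "has_finite_colimits C" and "has_finite_colimits D"
    and "factorisation_system C E M" and "costable C M"
    and "factorisation_system D E' M'" and "costable D M'"
    and "is_functor C D Fo Fa" and "preserves_finite_colimits C D Fo Fa"
    and "Fa ` M \<subseteq> M'"
    and "X \<in> cobj C" and "Y \<in> cobj C" and "Z \<in> cobj C"
    and "is_corel C E X Y f" and "is_corel C E Y Z g"
  shows "\<forall>gf bgf bf bg r.
           is_corel_comp C E M f g gf \<longrightarrow> is_box D E' M' Fa gf bgf \<longrightarrow>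
           is_box D E' M' Fa f bf \<longrightarrow> is_box D E' M' Fa g bg \<longrightarrow>
           is_corel_comp D E' M' bf bg r \<longrightarrow>
           cospan_iso D bgf r"
proof (intro allI impI)
  fix gf bgf bf bg r
  assume gf: "is_corel_comp C E M f g gf" and bgf: "is_box D E' M' Fa gf bgf"
    and bf: "is_box D E' M' Fa f bf" and bg: "is_box D E' M' Fa g bg"
    and r: "is_corel_comp D E' M' bf bg r"
  obtain i1 u1 i2 u2 where fg: "f = (i1, u1)" "g = (i2, u2)"
    by (cases f, cases g)
  have c1: "is_cospan C X Y (i1, u1)" and c2: "is_cospan C Y Z (i2, u2)"
    using assms(15,16) unfolding is_corel_def fg by auto
  obtain k1 k2 where k: "is_cospan_comp C (i1, u1) (i2, u2) (k1, k2)"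
    and gf_k: "is_Epart C E M (k1, k2) gf"
    using gf unfolding is_corel_comp_def fg by auto
  have bgf_Fk: "is_Epart D E' M' (Fa k1, Fa k2) bgf"
    using box_Epart_image[OF assms(1,2,5,7,9,11) gf_k bgf] .
  obtain k' where k': "is_cospan_comp D (Fa i1, Fa u1) (Fa i2, Fa u2) k'"
    and r_k': "is_Epart D E' M' k' r"
    using Epart_of_cospan_comp[OF assms(2,7,8,4) bf[unfolded is_box_def fg, simplified]
        bg[unfolded is_box_def fg, simplified] r] by blast
  have "cospan_iso D k' (Fa k1, Fa k2)"
    using cospan_comp_unique_up_to_iso[OF assms(2) functor_cospan[OF assms(9) c1]
        functor_cospan[OF assms(9) c2] k' functor_cospan_comp[OF assms(9,10) c1 c2 k]] .
  then have "is_Epart D E' M' (Fa k1, Fa k2) r"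
    using Epart_cospan_iso[OF assms(2,7) r_k'] by blast
  then show "cospan_iso D bgf r"
    using Epart_unique[OF assms(2,7) bgf_Fk] by blast
qed

end
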